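(* Let $q=1-p=o\!\left(\frac{1}{n^{1.5}}\right)$. Then for all sufficiently large $n\in\mathbb{N}$ we have $u_2(n,p)=u_2'(n,p)=3$.
   Context: $G(n,p)$ is the Erdős–Rényi random graph on $n$ labelled vertices (vertex set $V$), each edge present independently with probability $p=p(n)$; $\mathbb{P}_{n,p}$ is the corresponding probability and $q=1-p$. A diameter graph in $\mathbb{R}^d$ is a graph $(V,E)$ with $V\subset\mathbb{R}^d$ finite and $E=\{\{\mathbf{x},\mathbf{y}\}\subseteq V: |\mathbf{x}-\mathbf{y}|=\operatorname{diam}V\}$, where $\operatorname{diam}V=\max_{\mathbf{x},\mathbf{y}\in V}|\mathbf{x}-\mathbf{y}|$ (Euclidean norm); a graph is a diameter graph in $\mathbb{R}^d$ if it is isomorphic to one. $u_d(n,p)$ is the largest positive integer $k$ such that $\mathbb{P}_{n,p}\big(\exists W\subseteq V,\ |W|=k,\ G[W]$ is a diameter graph in $\mathbb{R}^d$ and $\chi(G[W])=d+1\big)>\frac12$, where $G[W]$ is the induced subgraph; if no such $k$ exists, $u_d(n,p)=0$. $u_d'(n,p)$ is defined identically with the additional requirement that $G[W]$ be connected. *)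

theory Defs
  imports Complex_Main "HOL-Library.Landau_Symbols"
begin

text \<open>Points of R^d are represented as functions nat => real, of which only the
  coordinates 0..d-1 are relevant.  Euclidean distance in R^d:\<close>
definition edist :: "nat \<Rightarrow> (nat \<Rightarrow> real) \<Rightarrow> (nat \<Rightarrow> real) \<Rightarrow> real" where
  "edist d x y = sqrt (\<Sum>i<d. (x i - y i)^2)"

text \<open>Graphs on vertex set W with edge set E (a set of 2-element subsets of W).
  (W,E) is a diameter graph in R^d iff it is isomorphic to one: there is an injective
  placement f of W into R^d such that the edges are exactly the pairs at distance diam.\<close>
definition is_diameter_graph :: "nat \<Rightarrow> 'v set \<Rightarrow> 'v set set \<Rightarrow> bool" where
  "is_diameter_graph d W E \<longleftrightarrow>
     (\<exists>f :: 'v \<Rightarrow> (nat \<Rightarrow> real).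
        (\<forall>x\<in>W. \<forall>y\<in>W. x \<noteq> y \<longrightarrow> edist d (f x) (f y) > 0) \<and>
        (let D = Max {edist d (f x) (f y) | x y. x \<in> W \<and> y \<in> W} in
         \<forall>e. e \<in> E \<longleftrightarrow> (\<exists>x\<in>W. \<exists>y\<in>W. x \<noteq> y \<and> e = {x, y} \<and> edist d (f x) (f y) = D)))"

definition chromatic_number :: "'v set \<Rightarrow> 'v set set \<Rightarrow> nat" where
  "chromatic_number W E =
     (LEAST k. \<exists>c :: 'v \<Rightarrow> nat. (\<forall>x\<in>W. c x < k) \<and>
                 (\<forall>x\<in>W. \<forall>y\<in>W. x \<noteq> y \<longrightarrow> {x, y} \<in> E \<longrightarrow> c x \<noteq> c y))"

definition graph_connected :: "'v set \<Rightarrow> 'v set set \<Rightarrow> bool" where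
  "graph_connected W E \<longleftrightarrow>
     (\<forall>x\<in>W. \<forall>y\<in>W. (\<lambda>a b. a \<in> W \<and> b \<in> W \<and> a \<noteq> b \<and> {a, b} \<in> E)\<^sup>*\<^sup>* x y)"

definition induced_edges :: "'v set set \<Rightarrow> 'v set \<Rightarrow> 'v set set" where
  "induced_edges E W = {e \<in> E. e \<subseteq> W}"

definition all_edges :: "nat \<Rightarrow> nat set set" where
  "all_edges n = {{i, j} | i j. i < j \<and> j < n}"

definition prob_Gnp :: "nat \<Rightarrow> real \<Rightarrow> (nat set set \<Rightarrow> bool) \<Rightarrow> real" where
  "prob_Gnp n p P =
     (\<Sum>E\<in>Pow (all_edges n).
        if P E then p ^ card E * (1 - p) ^ (card (all_edges n) - card E) else 0)"

definition u_good :: "bool \<Rightarrow> nat \<Rightarrow> nat \<Rightarrow> real \<Rightarrow> nat \<Rightarrow> bool" where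
  "u_good conn d n p k \<longleftrightarrow>
     prob_Gnp n p (\<lambda>E. \<exists>W. W \<subseteq> {..<n} \<and> card W = k \<and>
        is_diameter_graph d W (induced_edges E W) \<and>
        chromatic_number W (induced_edges E W) = d + 1 \<and>
        (conn \<longrightarrow> graph_connected W (induced_edges E W))) > 1/2"

text \<open>u_d(n,p) (conn = False) and u'_d(n,p) (conn = True): the largest positive k
  with the property, or 0 if there is none.\<close>
definition u :: "nat \<Rightarrow> nat \<Rightarrow> real \<Rightarrow> nat" where
  "u d n p = (if \<exists>k>0. u_good False d n p k then GREATEST k. k > 0 \<and> u_good False d n p k else 0)"

definition u' :: "nat \<Rightarrow> nat \<Rightarrow> real \<Rightarrow> nat" where
  "u' d n p = (if \<exists>k>0. u_good True d n p k then GREATEST k. k > 0 \<and> u_good True d n p k else 0)"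

end

theory Submission
  imports Defs
begin

text \<open>If \<open>q = 1 - p = o(n powr (-3/2))\<close>, a fixed triangle is present with probability
  \<open>\<ge> 1 - 3q\<close>, and the triangle is a connected 3-chromatic diameter graph in the plane; hence
  \<open>u\<^sub>2, u'\<^sub>2 \<ge> 3\<close>. Conversely, by the union bound over the \<open>\<le> n\<^sup>3\<close> triples, with probability
  \<open>\<ge> 1 - n\<^sup>3q\<^sup>2\<close> no vertex has two non-neighbours. In the plane, two equilateral triangles of
  side D on a common side have apices \<open>\<surd>3 D\<close> apart, so a planar diameter graph contains no
  diamond (\<open>K\<^sub>4\<close> minus an edge); and a diamond-free graph on at least four vertices in which
  every vertex has at most one non-neighbour is 2-colourable. So with probability
  \<open>\<ge> 1 - n\<^sup>3q\<^sup>2\<close> no induced subgraph on \<open>k \<ge> 4\<close> vertices is a 3-chromatic planar diameter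
  graph.\<close>

section \<open>The random graph \<open>G(n,p)\<close>\<close>

definition Gnp_weight :: "nat \<Rightarrow> real \<Rightarrow> nat set set \<Rightarrow> real" where
  "Gnp_weight n p E = p ^ card E * (1 - p) ^ (card (all_edges n) - card E)"

lemma finite_all_edges: "finite (all_edges n)"
proof -
  have "all_edges n \<subseteq> Pow {..<n}" unfolding all_edges_def by auto
  then show ?thesis by (rule finite_subset) simp
qed

lemma doubleton_in_all_edges: "a < n \<Longrightarrow> b < n \<Longrightarrow> a \<noteq> b \<Longrightarrow> {a, b} \<in> all_edges n"
  unfolding all_edges_def by (cases "a < b") (auto, metis insert_commute linorder_neqE_nat)

lemma sum_Pow_binomial:
  fixes p q :: "'a :: comm_semiring_1"
  assumes "finite S"
  shows "(\<Sum>E\<in>Pow S. p ^ card E * q ^ (card S - card E)) = (p + q) ^ card S"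
proof -
  have "(p + q) ^ card S = (\<Sum>E\<in>Pow S. (\<Prod>x\<in>E. p) * (\<Prod>x\<in>S - E. q))"
    using prod_add[OF assms, of "\<lambda>_. p" "\<lambda>_. q"] by simp
  also have "\<dots> = (\<Sum>E\<in>Pow S. p ^ card E * q ^ (card S - card E))"
    using assms by (intro sum.cong) (auto simp: card_Diff_subset finite_subset)
  finally show ?thesis by simp
qed

lemma prob_Gnp_eq_sum_weight:
  "prob_Gnp n p P = (\<Sum>E\<in>Pow (all_edges n). if P E then Gnp_weight n p E else 0)"
  unfolding prob_Gnp_def Gnp_weight_def by simp

lemma Gnp_weight_nonneg: "0 \<le> p \<Longrightarrow> p \<le> 1 \<Longrightarrow> 0 \<le> Gnp_weight n p E"
  unfolding Gnp_weight_def by simp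

lemma prob_Gnp_mono:
  assumes "0 \<le> p" "p \<le> 1" "\<And>E. E \<subseteq> all_edges n \<Longrightarrow> P E \<Longrightarrow> Q E"
  shows "prob_Gnp n p P \<le> prob_Gnp n p Q"
  unfolding prob_Gnp_eq_sum_weight by (rule sum_mono) (use assms Gnp_weight_nonneg in auto)

lemma prob_Gnp_union_bound:
  assumes "0 \<le> p" "p \<le> 1" "finite I"
  shows "prob_Gnp n p (\<lambda>E. \<exists>i\<in>I. Q i E) \<le> (\<Sum>i\<in>I. prob_Gnp n p (Q i))"
proof -
  have "prob_Gnp n p (\<lambda>E. \<exists>i\<in>I. Q i E)
      \<le> (\<Sum>E\<in>Pow (all_edges n). \<Sum>i\<in>I. if Q i E then Gnp_weight n p E else 0)"
    unfolding prob_Gnp_eq_sum_weight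
  proof (rule sum_mono)
    fix E
    show "(if \<exists>i\<in>I. Q i E then Gnp_weight n p E else 0)
          \<le> (\<Sum>i\<in>I. if Q i E then Gnp_weight n p E else 0)"
    proof (cases "\<exists>i\<in>I. Q i E")
      case True
      then obtain i where "i \<in> I" "Q i E" by blast
      then have "(if Q i E then Gnp_weight n p E else 0)
          \<le> (\<Sum>i\<in>I. if Q i E then Gnp_weight n p E else 0)"
        by (intro member_le_sum) (use assms Gnp_weight_nonneg in auto)
      with \<open>Q i E\<close> True show ?thesis by simp
    qed (use assms Gnp_weight_nonneg in \<open>auto intro: sum_nonneg\<close>)
  qed
  also have "\<dots> = (\<Sum>i\<in>I. prob_Gnp n p (Q i))"
    unfolding prob_Gnp_eq_sum_weight by (rule sum.swap)
  finally show ?thesis .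
qed

lemma prob_Gnp_not: "prob_Gnp n p (\<lambda>E. \<not> P E) = 1 - prob_Gnp n p P"
proof -
  have "prob_Gnp n p P + prob_Gnp n p (\<lambda>E. \<not> P E) = (\<Sum>E\<in>Pow (all_edges n). Gnp_weight n p E)"
    unfolding prob_Gnp_eq_sum_weight sum.distrib[symmetric] by (rule sum.cong) auto
  also have "\<dots> = 1"
    unfolding Gnp_weight_def sum_Pow_binomial[OF finite_all_edges] by simp
  finally show ?thesis by simp
qed

lemma prob_Gnp_disjoint:
  assumes "F \<subseteq> all_edges n"
  shows "prob_Gnp n p (\<lambda>E. F \<inter> E = {}) = (1 - p) ^ card F"
proof -
  let ?S = "all_edges n"
  have fin: "finite ?S" "finite F" using assms finite_all_edges finite_subset by auto
  have card_S: "card ?S = card F + card (?S - F)"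
    using assms fin by (simp add: card_Diff_subset card_mono)
  have "prob_Gnp n p (\<lambda>E. F \<inter> E = {}) = (\<Sum>E\<in>{E\<in>Pow ?S. F \<inter> E = {}}. Gnp_weight n p E)"
    unfolding prob_Gnp_eq_sum_weight using fin by (simp add: sum.inter_filter[symmetric] Pow_def)
  also have "{E\<in>Pow ?S. F \<inter> E = {}} = Pow (?S - F)" by auto
  also have "(\<Sum>E\<in>Pow (?S - F). Gnp_weight n p E)
      = (1 - p) ^ card F * (\<Sum>E\<in>Pow (?S - F). p ^ card E * (1 - p) ^ (card (?S - F) - card E))"
    unfolding sum_distrib_left Gnp_weight_def
    using fin card_S by (intro sum.cong) (auto simp: card_mono power_add[symmetric])
  also have "\<dots> = (1 - p) ^ card F"
    using fin by (simp add: sum_Pow_binomial)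
  finally show ?thesis .
qed

lemma prob_Gnp_subset_ge:
  fixes p :: real
  assumes "0 \<le> p" "p \<le> 1" "F \<subseteq> all_edges n"
  shows "prob_Gnp n p (\<lambda>E. F \<subseteq> E) \<ge> 1 - real (card F) * (1 - p)"
proof -
  have fin: "finite F" using assms finite_all_edges finite_subset by auto
  have "prob_Gnp n p (\<lambda>E. \<not> F \<subseteq> E) = prob_Gnp n p (\<lambda>E. \<exists>e\<in>F. {e} \<inter> E = {})"
    by (rule arg_cong[where f = "prob_Gnp n p"]) auto
  also have "\<dots> \<le> (\<Sum>e\<in>F. prob_Gnp n p (\<lambda>E. {e} \<inter> E = {}))"
    using assms fin by (intro prob_Gnp_union_bound)
  also have "\<dots> = (\<Sum>e\<in>F. (1 - p) ^ card {e})"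
    using assms by (intro sum.cong refl prob_Gnp_disjoint) auto
  also have "\<dots> = real (card F) * (1 - p)" by simp
  finally show ?thesis unfolding prob_Gnp_not by simp
qed

section \<open>Equilateral triangles on a common side\<close>

text \<open>Read \<open>u, v, w\<close> as \<open>b - a, c - a, d - a\<close>. If \<open>v \<noteq> w\<close>, both \<open>u\<close> and \<open>v + w\<close> are
  orthogonal to \<open>v - w\<close>, hence parallel (their cross product vanishes); Lagrange's identity then
  gives \<open>|v + w|\<^sup>2 = r\<close>, so \<open>|v - w|\<^sup>2 = 3r\<close>.\<close>
lemma plane_apices_coincide:
  fixes u1 u2 v1 v2 w1 w2 r :: real
  assumes u: "u1\<^sup>2 + u2\<^sup>2 = r" and v: "v1\<^sup>2 + v2\<^sup>2 = r" and w: "w1\<^sup>2 + w2\<^sup>2 = r"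
    and uv: "(u1 - v1)\<^sup>2 + (u2 - v2)\<^sup>2 = r" and uw: "(u1 - w1)\<^sup>2 + (u2 - w2)\<^sup>2 = r"
    and vw: "(v1 - w1)\<^sup>2 + (v2 - w2)\<^sup>2 \<le> r"
  shows "v1 = w1 \<and> v2 = w2"
proof -
  define z1 z2 s1 s2 where "z1 = v1 - w1" "z2 = v2 - w2" "s1 = v1 + w1" "s2 = v2 + w2"
  have uz: "u1 * z1 + u2 * z2 = 0" and sz: "s1 * z1 + s2 * z2 = 0" and us: "u1 * s1 + u2 * s2 = r"
    using u v w uv uw unfolding z1_z2_s1_s2_def by (simp_all add: power2_eq_square algebra_simps)
  have "(u1 * s2 - u2 * s1) * z1 = s2 * (u1 * z1 + u2 * z2) - u2 * (s1 * z1 + s2 * z2)"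
       "(u1 * s2 - u2 * s1) * z2 = u1 * (s1 * z1 + s2 * z2) - s1 * (u1 * z1 + u2 * z2)"
    by (simp_all add: algebra_simps)
  then have cross: "(u1 * s2 - u2 * s1) * z1 = 0" "(u1 * s2 - u2 * s1) * z2 = 0"
    using uz sz by simp_all
  show ?thesis
  proof (cases "u1 * s2 - u2 * s1 = 0")
    case True
    have "(u1 * s1 + u2 * s2)\<^sup>2 + (u1 * s2 - u2 * s1)\<^sup>2 = (u1\<^sup>2 + u2\<^sup>2) * (s1\<^sup>2 + s2\<^sup>2)"
      by (simp add: power2_eq_square algebra_simps)
    then have rS: "r\<^sup>2 = r * (s1\<^sup>2 + s2\<^sup>2)" using True us u by simp
    have "s1\<^sup>2 + s2\<^sup>2 + (z1\<^sup>2 + z2\<^sup>2) = 4 * r"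
      using v w unfolding z1_z2_s1_s2_def by (simp add: power2_eq_square algebra_simps)
    with vw have "3 * r \<le> s1\<^sup>2 + s2\<^sup>2" unfolding z1_z2_s1_s2_def by linarith
    moreover have "r \<ge> 0" using u by (metis sum_power2_ge_zero)
    ultimately have "r * (3 * r) \<le> r\<^sup>2" unfolding rS by (rule mult_left_mono)
    then have "r * r \<le> 0" by (simp add: power2_eq_square)
    then have "r = 0" using mult_le_0_iff[of r r] by linarith
    then show ?thesis using vw by (simp add: sum_power2_le_zero_iff)
  qed (use cross in \<open>simp add: z1_z2_s1_s2_def\<close>)
qed

lemma edist_commute: "edist d x y = edist d y x"
  unfolding edist_def by (simp add: power2_commute)

lemma edist_nonneg: "0 \<le> edist d x y"
  unfolding edist_def by (simp add: sum_nonneg)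

lemma edist_2: "edist 2 x y = sqrt ((x 0 - y 0)\<^sup>2 + (x 1 - y 1)\<^sup>2)"
  by (simp add: edist_def numeral_2_eq_2)

lemma edist_2_sq: "(edist 2 x y)\<^sup>2 = (x 0 - y 0)\<^sup>2 + (x 1 - y 1)\<^sup>2"
  unfolding edist_2 by simp

lemma plane_diamond_degenerate:
  assumes "edist 2 a b = D" "edist 2 a c = D" "edist 2 b c = D" "edist 2 a d = D" "edist 2 b d = D"
    and "edist 2 c d \<le> D"
  shows "edist 2 c d = 0"
proof -
  have sq: "(edist 2 x y)\<^sup>2 = D\<^sup>2" if "edist 2 x y = D" for x y using that by simp
  have "(edist 2 c d)\<^sup>2 \<le> D\<^sup>2"
    using assms(6) edist_nonneg by (rule power_mono)
  then have "c 0 - a 0 = d 0 - a 0 \<and> c 1 - a 1 = d 1 - a 1"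
    using sq[OF assms(1)] sq[OF assms(2)] sq[OF assms(3)] sq[OF assms(4)] sq[OF assms(5)]
    by (intro plane_apices_coincide[of "b 0 - a 0" "b 1 - a 1" "D\<^sup>2"])
      (simp_all add: edist_2_sq power2_commute)
  then show ?thesis by (simp add: edist_2)
qed

lemma diameter_graphE:
  assumes "is_diameter_graph d W E" "finite W"
  obtains f D where
    "\<And>x y. x \<in> W \<Longrightarrow> y \<in> W \<Longrightarrow> x \<noteq> y \<Longrightarrow> 0 < edist d (f x) (f y)"
    "\<And>x y. x \<in> W \<Longrightarrow> y \<in> W \<Longrightarrow> edist d (f x) (f y) \<le> D"
    "\<And>x y. x \<in> W \<Longrightarrow> y \<in> W \<Longrightarrow> x \<noteq> y \<Longrightarrow> {x, y} \<in> E \<longleftrightarrow> edist d (f x) (f y) = D"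
proof -
  obtain f where pos: "\<forall>x\<in>W. \<forall>y\<in>W. x \<noteq> y \<longrightarrow> 0 < edist d (f x) (f y)"
    and edges: "\<forall>e. e \<in> E \<longleftrightarrow> (\<exists>x\<in>W. \<exists>y\<in>W. x \<noteq> y \<and> e = {x, y} \<and>
        edist d (f x) (f y) = Max {edist d (f x) (f y) | x y. x \<in> W \<and> y \<in> W})"
    using assms(1) unfolding is_diameter_graph_def Let_def by blast
  define D where "D = Max {edist d (f x) (f y) | x y. x \<in> W \<and> y \<in> W}"
  have "{edist d (f x) (f y) | x y. x \<in> W \<and> y \<in> W} = (\<lambda>(x, y). edist d (f x) (f y)) ` (W \<times> W)"
    by auto
  then have le: "edist d (f x) (f y) \<le> D" if "x \<in> W" "y \<in> W" for x y
    unfolding D_def using assms(2) that by (auto intro: Max_ge)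
  have "{x, y} \<in> E \<longleftrightarrow> edist d (f x) (f y) = D" if "x \<in> W" "y \<in> W" "x \<noteq> y" for x y
    using edges that unfolding D_def by (auto simp: doubleton_eq_iff edist_commute)
  with pos le that show ?thesis by blast
qed

lemma plane_diameter_graph_diamond_free:
  assumes "is_diameter_graph 2 W E" "finite W"
    and "a \<in> W" "b \<in> W" "c \<in> W" "d \<in> W" "distinct [a, b, c, d]"
    and "{a, b} \<in> E" "{a, c} \<in> E" "{b, c} \<in> E" "{a, d} \<in> E" "{b, d} \<in> E"
  shows False
proof -
  obtain f D where pos: "\<And>x y. x \<in> W \<Longrightarrow> y \<in> W \<Longrightarrow> x \<noteq> y \<Longrightarrow> 0 < edist 2 (f x) (f y)"
    and le: "\<And>x y. x \<in> W \<Longrightarrow> y \<in> W \<Longrightarrow> edist 2 (f x) (f y) \<le> D"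
    and edge: "\<And>x y. x \<in> W \<Longrightarrow> y \<in> W \<Longrightarrow> x \<noteq> y \<Longrightarrow> {x, y} \<in> E \<longleftrightarrow> edist 2 (f x) (f y) = D"
    using diameter_graphE[OF assms(1,2)] by metis
  have D: "edist 2 (f x) (f y) = D" if "{x, y} \<in> E" "x \<in> W" "y \<in> W" "x \<noteq> y" for x y
    using edge that by blast
  have "edist 2 (f c) (f d) = 0"
    by (rule plane_diamond_degenerate[of "f a" "f b" D "f c" "f d"]) (use assms in \<open>auto intro: D le\<close>)
  with pos assms(5-7) show False by fastforce
qed

section \<open>Two-colouring diamond-free graphs\<close>

lemma four_distinct_elements:
  assumes "4 \<le> card W"
  obtains a b c d where "a \<in> W" "b \<in> W" "c \<in> W" "d \<in> W" "distinct [a, b, c, d]"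
proof -
  obtain T where T: "T \<subseteq> W" "card T = Suc 3" using obtain_subset_with_card_n[OF assms] by auto
  then obtain a S where "T = insert a S" "a \<notin> S" "card S = 3" using T(2) by (metis card_Suc_eq)
  then obtain b c d where "T = {a, b, c, d}" "distinct [a, b, c, d]" by (auto simp: card_3_iff)
  then show ?thesis using that T by auto
qed

text \<open>Four pairwise adjacent vertices would contain a diamond, so there is a non-edge \<open>{x, y}\<close>.
  Every other vertex is adjacent to both \<open>x\<close> and \<open>y\<close>, so an edge avoiding \<open>{x, y}\<close> would
  again complete a diamond: colour \<open>x, y\<close> with 0 and all other vertices with 1.\<close>
lemma chromatic_number_le_2_if_diamond_free:
  assumes card: "4 \<le> card W"
    and one_non_neighbour: "\<And>x y z. x \<in> W \<Longrightarrow> y \<in> W \<Longrightarrow> z \<in> W \<Longrightarrow> distinct [x, y, z] \<Longrightarrow>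
      {x, y} \<in> E \<or> {x, z} \<in> E"
    and diamond_free: "\<And>a b c d. a \<in> W \<Longrightarrow> b \<in> W \<Longrightarrow> c \<in> W \<Longrightarrow> d \<in> W \<Longrightarrow> distinct [a, b, c, d] \<Longrightarrow>
      {a, b} \<in> E \<Longrightarrow> {a, c} \<in> E \<Longrightarrow> {b, c} \<in> E \<Longrightarrow> {a, d} \<in> E \<Longrightarrow> {b, d} \<in> E \<Longrightarrow> False"
  shows "chromatic_number W E \<le> 2"
proof -
  have "\<exists>x\<in>W. \<exists>y\<in>W. x \<noteq> y \<and> {x, y} \<notin> E"
  proof (rule ccontr)
    assume "\<not> ?thesis"
    moreover obtain a b c d where "a \<in> W" "b \<in> W" "c \<in> W" "d \<in> W" "distinct [a, b, c, d]"
      using four_distinct_elements[OF card] .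
    ultimately show False using diamond_free[of a b c d] by auto
  qed
  then obtain x y where xy: "x \<in> W" "y \<in> W" "x \<noteq> y" "{x, y} \<notin> E" by blast
  have joined: "{t, x} \<in> E" "{t, y} \<in> E" if "t \<in> W" "t \<notin> {x, y}" for t
    using one_non_neighbour[of x y t] one_non_neighbour[of y x t] xy that
    by (auto simp: insert_commute)
  define col :: "'a \<Rightarrow> nat" where "col v = (if v \<in> {x, y} then 0 else 1)" for v
  have "{a, b} \<notin> E" if "a \<in> W" "b \<in> W" "a \<noteq> b" "col a = col b" for a b
  proof (cases "a \<in> {x, y}")
    case True
    with that xy show ?thesis by (auto simp: col_def insert_commute split: if_splits)
  next
    case False
    with that have "b \<notin> {x, y}" by (auto simp: col_def split: if_splits)
    with False that xy joined[of a] joined[of b] show ?thesis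
      using diamond_free[of a b x y] by auto
  qed
  then have "\<exists>c :: 'a \<Rightarrow> nat. (\<forall>v\<in>W. c v < 2) \<and> (\<forall>a\<in>W. \<forall>b\<in>W. a \<noteq> b \<longrightarrow> {a, b} \<in> E \<longrightarrow> c a \<noteq> c b)"
    by (intro exI[of _ col]) (auto simp: col_def)
  then show ?thesis unfolding chromatic_number_def by (rule Least_le)
qed

lemma triangle_diameter_graph:
  assumes "distinct [a, b, c]"
  shows "is_diameter_graph 2 {a, b, c} {{a, b}, {a, c}, {b, c}}"
proof -
  define f :: "'a \<Rightarrow> nat \<Rightarrow> real" where
    "f v = (if v = a then (\<lambda>_. 0) else if v = b then (\<lambda>i. if i = 0 then 1 else 0)
            else (\<lambda>i. if i = 0 then 1 / 2 else sqrt 3 / 2))" for v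
  have unit: "edist 2 (f x) (f y) = 1" if "x \<in> {a, b, c}" "y \<in> {a, b, c}" "x \<noteq> y" for x y
    using that assms by (auto simp: edist_2 f_def power_divide)
  have self: "edist 2 (f x) (f x) = 0" for x by (simp add: edist_2)
  have "{edist 2 (f x) (f y) | x y. x \<in> {a, b, c} \<and> y \<in> {a, b, c}} = {0, 1}"
  proof (intro equalityI subsetI)
    fix t assume "t \<in> {edist 2 (f x) (f y) | x y. x \<in> {a, b, c} \<and> y \<in> {a, b, c}}"
    then obtain x y where "t = edist 2 (f x) (f y)" "x \<in> {a, b, c}" "y \<in> {a, b, c}" by blast
    then show "t \<in> {0, 1}" using unit self by (cases "x = y") auto
  next
    fix t assume "t \<in> {0, 1 :: real}"
    then show "t \<in> {edist 2 (f x) (f y) | x y. x \<in> {a, b, c} \<and> y \<in> {a, b, c}}"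
      using self[of a] unit[of a b] assms by (auto; blast)
  qed
  then show ?thesis
    unfolding is_diameter_graph_def Let_def using unit assms
    by (intro exI[of _ f]) (auto simp: doubleton_eq_iff)
qed

lemma triangle_chromatic_number:
  assumes "distinct [a, b, c]"
  shows "chromatic_number {a, b, c} {{a, b}, {a, c}, {b, c}} = 3"
  unfolding chromatic_number_def
proof (rule Least_equality)
  let ?col = "\<lambda>v. if v = a then 0 else if v = b then 1 else 2 :: nat"
  show "\<exists>col :: 'a \<Rightarrow> nat. (\<forall>x\<in>{a, b, c}. col x < 3) \<and>
      (\<forall>x\<in>{a, b, c}. \<forall>y\<in>{a, b, c}. x \<noteq> y \<longrightarrow> {x, y} \<in> {{a, b}, {a, c}, {b, c}} \<longrightarrow> col x \<noteq> col y)"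
    using assms by (intro exI[of _ ?col]) auto
next
  fix k
  assume "\<exists>col :: 'a \<Rightarrow> nat. (\<forall>x\<in>{a, b, c}. col x < k) \<and>
      (\<forall>x\<in>{a, b, c}. \<forall>y\<in>{a, b, c}. x \<noteq> y \<longrightarrow> {x, y} \<in> {{a, b}, {a, c}, {b, c}} \<longrightarrow> col x \<noteq> col y)"
  then obtain col :: "'a \<Rightarrow> nat" where bound: "\<forall>x\<in>{a, b, c}. col x < k"
    and proper: "\<forall>x\<in>{a, b, c}. \<forall>y\<in>{a, b, c}. x \<noteq> y \<longrightarrow> {x, y} \<in> {{a, b}, {a, c}, {b, c}} \<longrightarrow> col x \<noteq> col y"
    by blast
  have "col a \<noteq> col b" "col a \<noteq> col c" "col b \<noteq> col c"
    using proper assms by auto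
  with bound show "3 \<le> k" by simp
qed

lemma triangle_connected:
  assumes "distinct [a, b, c]"
  shows "graph_connected {a, b, c} {{a, b}, {a, c}, {b, c}}"
  unfolding graph_connected_def
  using assms by (auto intro!: r_into_rtranclp simp: insert_commute)

lemma induced_edges_triangle:
  assumes "E \<subseteq> all_edges n" "{{a, b}, {a, c}, {b, c}} \<subseteq> E"
  shows "induced_edges E {a, b, c} = {{a, b}, {a, c}, {b, c}}"
proof (intro equalityI subsetI)
  fix e assume "e \<in> induced_edges E {a, b, c}"
  then obtain i j where "e = {i, j}" "i \<noteq> j" "{i, j} \<subseteq> {a, b, c}"
    using assms(1) unfolding induced_edges_def all_edges_def by blast
  then show "e \<in> {{a, b}, {a, c}, {b, c}}" by (auto simp: insert_commute)
qed (use assms(2) in \<open>auto simp: induced_edges_def\<close>)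

lemma u_good_plane_triangle:
  fixes p :: real
  assumes "3 \<le> n" "0 \<le> p" "p \<le> 1" "1 - p < 1 / 6"
  shows "u_good conn 2 n p 3"
proof -
  let ?T = "{{0, 1}, {0, 2}, {1, 2}} :: nat set set"
  have T: "?T \<subseteq> all_edges n" using assms(1) by (auto intro!: doubleton_in_all_edges)
  have "card ?T = 3" by (simp add: doubleton_eq_iff)
  then have "1 / 2 < 1 - real (card ?T) * (1 - p)" using assms(4) by simp
  also have "\<dots> \<le> prob_Gnp n p (\<lambda>E. ?T \<subseteq> E)"
    by (rule prob_Gnp_subset_ge[OF assms(2,3) T])
  also have "\<dots> \<le> prob_Gnp n p (\<lambda>E. \<exists>W. W \<subseteq> {..<n} \<and> card W = 3 \<and>
        is_diameter_graph 2 W (induced_edges E W) \<and>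
        chromatic_number W (induced_edges E W) = 2 + 1 \<and>
        (conn \<longrightarrow> graph_connected W (induced_edges E W)))"
  proof (rule prob_Gnp_mono[OF assms(2,3)])
    fix E assume "E \<subseteq> all_edges n" "?T \<subseteq> E"
    then have "induced_edges E {0, 1, 2} = ?T" by (rule induced_edges_triangle)
    moreover have d: "distinct [0, 1, 2 :: nat]" by simp
    ultimately show "\<exists>W. W \<subseteq> {..<n} \<and> card W = 3 \<and>
        is_diameter_graph 2 W (induced_edges E W) \<and>
        chromatic_number W (induced_edges E W) = 2 + 1 \<and>
        (conn \<longrightarrow> graph_connected W (induced_edges E W))"
      using assms(1) triangle_diameter_graph[OF d] triangle_chromatic_number[OF d]
        triangle_connected[OF d]
      by (intro exI[of _ "{0, 1, 2}"]) auto
  qed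
  finally show ?thesis unfolding u_good_def .
qed

lemma prob_Gnp_two_non_neighbours_le:
  fixes p :: real
  assumes "0 \<le> p" "p \<le> 1"
  shows "prob_Gnp n p (\<lambda>E. \<exists>a<n. \<exists>b<n. \<exists>c<n. distinct [a, b, c] \<and> {a, b} \<notin> E \<and> {a, c} \<notin> E)
    \<le> real n ^ 3 * (1 - p)\<^sup>2"
proof -
  define T where "T = {(a, b, c). a < n \<and> b < n \<and> c < n \<and> distinct [a, b, c :: nat]}"
  define G :: "nat \<times> nat \<times> nat \<Rightarrow> nat set set" where "G = (\<lambda>(a, b, c). {{a, b}, {a, c}})"
  have T: "T \<subseteq> {..<n} \<times> {..<n} \<times> {..<n}" unfolding T_def by auto
  then have "finite T" by (rule finite_subset) simp
  have "card T \<le> n ^ 3"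
    using card_mono[OF _ T] by (simp add: card_cartesian_product power3_eq_cube)
  have G: "G t \<subseteq> all_edges n" "card (G t) = 2" if "t \<in> T" for t
    using that unfolding T_def G_def by (auto intro!: doubleton_in_all_edges simp: doubleton_eq_iff)
  have "prob_Gnp n p (\<lambda>E. \<exists>a<n. \<exists>b<n. \<exists>c<n. distinct [a, b, c] \<and> {a, b} \<notin> E \<and> {a, c} \<notin> E)
      = prob_Gnp n p (\<lambda>E. \<exists>t\<in>T. G t \<inter> E = {})"
    unfolding T_def G_def by (rule arg_cong[where f = "prob_Gnp n p"]) auto
  also have "\<dots> \<le> (\<Sum>t\<in>T. prob_Gnp n p (\<lambda>E. G t \<inter> E = {}))"
    using assms \<open>finite T\<close> by (rule prob_Gnp_union_bound)
  also have "\<dots> = real (card T) * (1 - p)\<^sup>2"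
    using G by (simp add: prob_Gnp_disjoint)
  also have "\<dots> \<le> real n ^ 3 * (1 - p)\<^sup>2"
    using \<open>card T \<le> n ^ 3\<close> by (intro mult_right_mono) (auto simp flip: of_nat_power)
  finally show ?thesis .
qed

lemma not_u_good_plane_if_4_le:
  fixes p :: real
  assumes "0 \<le> p" "p \<le> 1" "real n ^ 3 * (1 - p)\<^sup>2 < 1 / 2" "4 \<le> k"
  shows "\<not> u_good conn 2 n p k"
proof -
  have "prob_Gnp n p (\<lambda>E. \<exists>W. W \<subseteq> {..<n} \<and> card W = k \<and>
        is_diameter_graph 2 W (induced_edges E W) \<and>
        chromatic_number W (induced_edges E W) = 2 + 1 \<and>
        (conn \<longrightarrow> graph_connected W (induced_edges E W)))
    \<le> prob_Gnp n p (\<lambda>E. \<exists>a<n. \<exists>b<n. \<exists>c<n. distinct [a, b, c] \<and> {a, b} \<notin> E \<and> {a, c} \<notin> E)"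
  proof (rule prob_Gnp_mono[OF assms(1,2)])
    fix E assume "\<exists>W. W \<subseteq> {..<n} \<and> card W = k \<and>
        is_diameter_graph 2 W (induced_edges E W) \<and>
        chromatic_number W (induced_edges E W) = 2 + 1 \<and>
        (conn \<longrightarrow> graph_connected W (induced_edges E W))"
    then obtain W where W: "W \<subseteq> {..<n}" "card W = k"
      "is_diameter_graph 2 W (induced_edges E W)" "chromatic_number W (induced_edges E W) = 3"
      by auto
    have "finite W" using W(1) finite_subset by blast
    show "\<exists>a<n. \<exists>b<n. \<exists>c<n. distinct [a, b, c] \<and> {a, b} \<notin> E \<and> {a, c} \<notin> E"
    proof (rule ccontr)
      assume no_cherry: "\<not> ?thesis"
      have "chromatic_number W (induced_edges E W) \<le> 2"
      proof (rule chromatic_number_le_2_if_diamond_free)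
        fix x y z assume "x \<in> W" "y \<in> W" "z \<in> W" "distinct [x, y, z]"
        then show "{x, y} \<in> induced_edges E W \<or> {x, z} \<in> induced_edges E W"
          using no_cherry W(1) by (auto simp: induced_edges_def)
      next
        fix a b c d assume "a \<in> W" "b \<in> W" "c \<in> W" "d \<in> W" "distinct [a, b, c, d]"
          "{a, b} \<in> induced_edges E W" "{a, c} \<in> induced_edges E W" "{b, c} \<in> induced_edges E W"
          "{a, d} \<in> induced_edges E W" "{b, d} \<in> induced_edges E W"
        then show False by (rule plane_diameter_graph_diamond_free[OF W(3) \<open>finite W\<close>])
      qed (use W(2) assms(4) in simp)
      with W(4) show False by simp
    qed
  qed
  also have "\<dots> \<le> real n ^ 3 * (1 - p)\<^sup>2"
    using assms(1,2) by (rule prob_Gnp_two_non_neighbours_le)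
  finally show ?thesis using assms(3) unfolding u_good_def by simp
qed

lemma greatest_u_good_eq:
  assumes "0 < k" "u_good conn d n p k" "\<And>k'. k < k' \<Longrightarrow> \<not> u_good conn d n p k'"
  shows "(if \<exists>k>0. u_good conn d n p k then GREATEST k. k > 0 \<and> u_good conn d n p k else 0) = k"
proof -
  have "(GREATEST k. k > 0 \<and> u_good conn d n p k) = k"
    using assms by (intro Greatest_equality) (auto simp: not_less[symmetric])
  with assms(1,2) show ?thesis by auto
qed

lemma eventually_non_edge_prob_small:
  fixes q :: "nat \<Rightarrow> real"
  assumes "q \<in> o(\<lambda>n. 1 / real n powr (3/2))"
  shows "\<forall>\<^sub>F n in sequentially. q n \<le> 1 / 10 \<and> real n ^ 3 * (q n)\<^sup>2 \<le> 1 / 100"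
proof -
  have "\<forall>\<^sub>F n in sequentially. norm (q n) \<le> 1 / 10 * norm (1 / real n powr (3/2))"
    using assms by (rule landau_o.smallD) simp
  moreover have "\<forall>\<^sub>F n in sequentially. n \<ge> 1" by (rule eventually_ge_at_top)
  ultimately show ?thesis
  proof eventually_elim
    case (elim n)
    then have n: "real n \<ge> 1" by simp
    define s where "s = real n powr (3/2)"
    have "s \<ge> 1" unfolding s_def using n by (simp add: ge_one_powr_ge_zero)
    have "s\<^sup>2 = real n ^ 3"
      unfolding s_def using n by (simp add: power2_eq_square powr_add[symmetric] powr_realpow)
    have qs: "\<bar>q n\<bar> * s \<le> 1 / 10"
      using elim n unfolding s_def by (simp add: divide_simps)
    have "q n \<le> \<bar>q n\<bar> * s"
      using mult_left_mono[OF \<open>s \<ge> 1\<close>, of "\<bar>q n\<bar>"] by simp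
    moreover have "real n ^ 3 * (q n)\<^sup>2 = (\<bar>q n\<bar> * s)\<^sup>2"
      using \<open>s\<^sup>2 = real n ^ 3\<close> by (simp add: power_mult_distrib)
    moreover have "(\<bar>q n\<bar> * s)\<^sup>2 \<le> (1 / 10)\<^sup>2"
      using qs \<open>s \<ge> 1\<close> by (intro power_mono) auto
    ultimately show ?case using qs by (simp add: power_divide)
  qed
qed

theorem theorem14:
  fixes p :: "nat \<Rightarrow> real"
  assumes "\<forall>n. 0 \<le> p n \<and> p n \<le> 1"
    and "(\<lambda>n. 1 - p n) \<in> o(\<lambda>n. 1 / real n powr (3/2))"
  shows "\<forall>\<^sub>F n in sequentially. u 2 n (p n) = 3 \<and> u' 2 n (p n) = 3"
  using eventually_non_edge_prob_small[OF assms(2)] eventually_ge_at_top[of 3]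
proof eventually_elim
  case (elim n)
  have p: "0 \<le> p n" "p n \<le> 1" using assms(1) by auto
  have good: "u_good conn 2 n (p n) 3" for conn
    using u_good_plane_triangle[OF _ p] elim by simp
  have bad: "\<not> u_good conn 2 n (p n) k" if "3 < k" for conn k
    using not_u_good_plane_if_4_le[OF p] elim that by simp
  show ?case
    unfolding u_def u'_def using greatest_u_good_eq[OF _ good bad] by simp
qed

end
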